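(* Let $q$ be an odd prime power, $n$ a positive integer with $n\mid(q-1)$, $\lambda\in\mathbb{F}_q^{*}$ with multiplicative order dividing $\frac{q-1}{n}$, and let $\alpha_1,\dots,\alpha_n\in\mathbb{F}_q^{*}$ be the (pairwise distinct) roots of $x^n-\lambda$, i.e. $x^n-\lambda=\prod_{i=1}^n(x-\alpha_i)$, in some fixed order. Let $\ell\ge0$, $\boldsymbol\eta=(\eta_0,\dots,\eta_\ell)\in\mathbb{F}_q^{\ell+1}\setminus\{\boldsymbol0\}$, let $r$ be an integer with $0\le r\le\ell$, and let $k=\frac{n-\ell-r}{2}$ be an integer with $k\ge2$. Let $\boldsymbol v=(v_1,\dots,v_n)$ with $v_i\in\{-1,1\}$ for $k\le i\le n$ and $v_i\in\mathbb{F}_q\setminus\{-1,0,1\}$ for $1\le i\le k-1$. Suppose $$1+\sum_{t=r}^{\ell}\eta_t\,\Phi_{\ell+1+r-t}\neq0,\qquad\text{where }\Phi_i=(-1)^{n-1}P\,\Omega_i\ (1\le i\le\ell+1).$$ Then the $( * )$-$(\mathcal{L},\mathcal{P})$-TGRS code $\mathcal{C}$ is an LCD code, i.e. $\mathcal{C}\cap\mathcal{C}^{\perp}=\{\boldsymbol0\}$.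
   Context: $P=\prod_{i=1}^n\alpha_i$. For an integer $t$, $S_t(x_1,\dots,x_n)$ is the complete homogeneous symmetric polynomial of degree $t$ ($S_t=0$ for $t<0$, $S_0=1$, and $S_t=\sum_{t_1+\dots+t_n=t,\,t_i\ge0}x_1^{t_1}\cdots x_n^{t_n}$ for $t\ge0$), and $\Omega_i=\sum_{t=0}^{\ell}\eta_tS_{t+1-i}(\alpha_1,\dots,\alpha_n)$. The $( * )$-$(\mathcal{L},\mathcal{P})$-TGRS code is $\mathcal{C}=\{(v_1f(\alpha_1),\dots,v_nf(\alpha_n)) : f\in\mathcal{F}_{n,k,\boldsymbol\eta}\}$, where $\mathcal{F}_{n,k,\boldsymbol\eta}=\{\sum_{i=0}^{k-1}f_ix^i+f_0\sum_{j=0}^{\ell}\eta_jx^{k+j} : f_i\in\mathbb{F}_q\}$. $\mathcal{C}^{\perp}$ is the dual with respect to the standard inner product $\sum_i x_iy_i$. *)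

theory Defs
  imports "HOL-Computational_Algebra.Polynomial" "HOL-Library.FuncSet"
begin

definition compl_hom :: "int \<Rightarrow> nat \<Rightarrow> (nat \<Rightarrow> 'a::comm_ring_1) \<Rightarrow> 'a" where
  "compl_hom t n x =
     (if t < 0 then 0
      else (\<Sum>e \<in> {e \<in> {1..n} \<rightarrow>\<^sub>E {0..nat t}. (\<Sum>i\<in>{1..n}. e i) = nat t}.
              \<Prod>i\<in>{1..n}. x i ^ e i))"

definition Omega :: "nat \<Rightarrow> nat \<Rightarrow> (nat \<Rightarrow> 'a::comm_ring_1) \<Rightarrow> (nat \<Rightarrow> 'a) \<Rightarrow> nat \<Rightarrow> 'a" where
  "Omega n l eta alpha i = (\<Sum>t\<in>{0..l}. eta t * compl_hom (int t + 1 - int i) n alpha)"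

definition Phi :: "nat \<Rightarrow> nat \<Rightarrow> (nat \<Rightarrow> 'a::comm_ring_1) \<Rightarrow> (nat \<Rightarrow> 'a) \<Rightarrow> nat \<Rightarrow> 'a" where
  "Phi n l eta alpha i = (-1) ^ (n - 1) * (\<Prod>j\<in>{1..n}. alpha j) * Omega n l eta alpha i"

definition tgrs_poly :: "nat \<Rightarrow> nat \<Rightarrow> (nat \<Rightarrow> 'a::comm_ring_1) \<Rightarrow> (nat \<Rightarrow> 'a) \<Rightarrow> 'a poly" where
  "tgrs_poly k l eta f =
     (\<Sum>i<k. monom (f i) i) + smult (f 0) (\<Sum>j\<in>{0..l}. monom (eta j) (k + j))"

text \<open>Codewords are vectors indexed by 1..n, represented as functions vanishing outside {1..n}.\<close>
definition tgrs_code :: "nat \<Rightarrow> nat \<Rightarrow> nat \<Rightarrow> (nat \<Rightarrow> 'a::comm_ring_1) \<Rightarrow> (nat \<Rightarrow> 'a) \<Rightarrow> (nat \<Rightarrow> 'a)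
     \<Rightarrow> (nat \<Rightarrow> 'a) set" where
  "tgrs_code n k l eta alpha v =
     {c. \<exists>f. c = (\<lambda>i. if i \<in> {1..n} then v i * poly (tgrs_poly k l eta f) (alpha i) else 0)}"

definition dual_code :: "nat \<Rightarrow> (nat \<Rightarrow> 'a::comm_ring_1) set \<Rightarrow> (nat \<Rightarrow> 'a) set" where
  "dual_code n C = {y. (\<forall>i. i \<notin> {1..n} \<longrightarrow> y i = 0) \<and> (\<forall>c\<in>C. (\<Sum>i\<in>{1..n}. c i * y i) = 0)}"

definition is_LCD :: "nat \<Rightarrow> (nat \<Rightarrow> 'a::comm_ring_1) set \<Rightarrow> bool" where
  "is_LCD n C \<longleftrightarrow> C \<inter> dual_code n C = {\<lambda>_. 0}"

end

theory Submission
  imports Defs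
begin

text \<open>
  If \<open>c = (v i * f(alpha i))\<^sub>i\<close> lies in \<open>C \<inter> C\<^sup>\<bottom>\<close>, the weights \<open>w i = v i\<^sup>2 * f(alpha i)\<close>
  are orthogonal to \<open>(g(alpha i))\<^sub>i\<close> for every \<open>g\<close> in the code's polynomial space. Since the
  \<open>alpha i\<close> are the \<open>n\<close>-th roots of \<open>lam\<close>, the polynomial of degree \<open>< n\<close> interpolating
  \<open>w\<close> has \<open>m\<close>-th coefficient \<open>(\<Sum>i. w i * alpha i ^ (n - m)) / (n * lam)\<close> (inverse
  discrete Fourier transform). Orthogonality to \<open>x, ..., x^(k-1)\<close> kills its top \<open>k - 1\<close>
  coefficients, so it has degree \<open>\<le> n - k\<close> and equals \<open>f\<close>, as \<open>v i\<^sup>2 = 1\<close> at the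
  \<open>n - k + 1\<close> points \<open>alpha k, ..., alpha n\<close>. Orthogonality to the twisted monomial
  \<open>1 + \<Sum>j. eta j * x^(k+j)\<close> then reads \<open>f 0 * (1 + lam * \<Sum>t. eta t * eta (l+r-t)) = 0\<close>,
  and the second factor is the one in the hypothesis: the complete homogeneous symmetric
  polynomials of the \<open>alpha i\<close> vanish in degrees \<open>1, ..., n - 1\<close>, whence
  \<open>Phi i = lam * eta (i - 1)\<close>. So \<open>f 0 = 0\<close>, and \<open>f\<close>, of degree \<open>< k\<close>, vanishes at \<open>0\<close>
  and (as \<open>v i\<^sup>2 \<noteq> 1\<close> there) at \<open>alpha 1, ..., alpha (k-1)\<close>.
\<close>

lemma prod_monom:
  "finite A \<Longrightarrow> (\<Prod>i\<in>A. monom (c i) (d i)) = monom (\<Prod>i\<in>A. c i) (\<Sum>i\<in>A. d i)"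
  by (induction A rule: finite_induct) (auto simp: mult_monom)

lemma one_minus_mult_truncated_geometric:
  fixes c :: "'a::comm_ring_1"
  shows "[:1, - c:] * (\<Sum>e\<le>m. monom (c ^ e) e) = 1 - monom (c ^ Suc m) (Suc m)"
proof (induction m)
  case 0
  then show ?case by (simp add: monom_Suc monom_0 one_pCons)
next
  case (Suc m)
  have "[:1, - c:] * (\<Sum>e\<le>Suc m. monom (c ^ e) e)
      = [:1, - c:] * (\<Sum>e\<le>m. monom (c ^ e) e) + [:1, - c:] * monom (c ^ Suc m) (Suc m)"
    by (simp add: distrib_left)
  also have "[:1, - c:] * monom (c ^ Suc m) (Suc m)
      = monom (c ^ Suc m) (Suc m) - monom (c ^ Suc (Suc m)) (Suc (Suc m))"
    by (simp add: mult_pCons_left monom_Suc smult_monom minus_monom)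
  finally show ?case unfolding Suc.IH by simp
qed

lemma monom_dvd_prod_one_minus_monom:
  fixes c :: "'b \<Rightarrow> 'a::comm_ring_1"
  assumes "finite A"
  shows "monom 1 M dvd (\<Prod>i\<in>A. 1 - monom (c i) M) - 1"
  using assms
proof (induction A rule: finite_induct)
  case (insert a A)
  have "(\<Prod>i\<in>insert a A. 1 - monom (c i) M) - 1
      = ((\<Prod>i\<in>A. 1 - monom (c i) M) - 1) - monom 1 M * [:c a:] * (\<Prod>i\<in>A. 1 - monom (c i) M)"
    using insert.hyps by (simp add: algebra_simps smult_monom)
  with insert.IH show ?case by (metis dvd_diff dvd_mult2 dvd_triv_left)
qed simp

lemma coeff_prod_truncated_geometric:
  fixes x :: "nat \<Rightarrow> 'a::comm_ring_1"
  assumes "j \<le> m"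
  shows "coeff (\<Prod>i\<in>{1..n}. \<Sum>e\<le>m. monom (x i ^ e) e) j = compl_hom (int j) n x"
proof -
  let ?E = "{1..n} \<rightarrow>\<^sub>E {..m}"
  have "(\<Prod>i\<in>{1..n}. \<Sum>e\<le>m. monom (x i ^ e) e) = (\<Sum>g\<in>?E. \<Prod>i\<in>{1..n}. monom (x i ^ g i) (g i))"
    by (rule prod_sum_PiE) auto
  also have "\<dots> = (\<Sum>g\<in>?E. monom (\<Prod>i\<in>{1..n}. x i ^ g i) (\<Sum>i\<in>{1..n}. g i))"
    by (simp add: prod_monom)
  finally have "coeff (\<Prod>i\<in>{1..n}. \<Sum>e\<le>m. monom (x i ^ e) e) j
      = (\<Sum>g\<in>{g\<in>?E. (\<Sum>i\<in>{1..n}. g i) = j}. \<Prod>i\<in>{1..n}. x i ^ g i)"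
    by (simp add: coeff_sum coeff_monom sum.inter_filter finite_PiE)
  also have "{g\<in>?E. (\<Sum>i\<in>{1..n}. g i) = j} = {g \<in> {1..n} \<rightarrow>\<^sub>E {0..j}. (\<Sum>i\<in>{1..n}. g i) = j}"
    using assms by (force simp: PiE_iff intro: member_le_sum order.trans[of _ j m])
  finally show ?thesis by (simp add: compl_hom_def)
qed

lemma compl_hom_convolution:
  fixes x :: "nat \<Rightarrow> 'a::comm_ring_1"
  shows "(\<Sum>j\<le>m. coeff (\<Prod>i\<in>{1..n}. [:1, - x i:]) j * compl_hom (int (m - j)) n x)
    = (if m = 0 then 1 else 0)"
proof -
  define G where "G = (\<Prod>i\<in>{1..n}. \<Sum>e\<le>m. monom (x i ^ e) e)"
  have "(\<Prod>i\<in>{1..n}. [:1, - x i:]) * G = (\<Prod>i\<in>{1..n}. 1 - monom (x i ^ Suc m) (Suc m))"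
    unfolding G_def prod.distrib[symmetric] by (simp only: one_minus_mult_truncated_geometric)
  moreover have "coeff ((\<Prod>i\<in>{1..n}. 1 - monom (x i ^ Suc m) (Suc m)) - 1) m = 0"
    using monom_dvd_prod_one_minus_monom[of "{1..n}" "Suc m" "\<lambda>i. x i ^ Suc m"]
    unfolding monom_1_dvd_iff' by blast
  ultimately have "coeff ((\<Prod>i\<in>{1..n}. [:1, - x i:]) * G) m = (if m = 0 then 1 else 0)"
    by (simp add: coeff_1)
  moreover have "coeff G (m - j) = compl_hom (int (m - j)) n x" for j
    unfolding G_def by (rule coeff_prod_truncated_geometric) simp
  ultimately show ?thesis
    by (simp only: coeff_mult)
qed

lemma poly_pderiv_prod_linear:
  fixes x :: "'b \<Rightarrow> 'a::idom"
  assumes "finite A" "a \<in> A"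
  shows "poly (pderiv (\<Prod>i\<in>A. [:- x i, 1:])) (x a) = (\<Prod>j\<in>A - {a}. x a - x j)"
proof -
  have "poly (pderiv (\<Prod>i\<in>A. [:- x i, 1:])) (x a) = (\<Sum>b\<in>A. \<Prod>j\<in>A - {b}. x a - x j)"
    by (simp add: pderiv_prod pderiv_pCons poly_sum poly_prod)
  also have "\<dots> = (\<Sum>b\<in>A. if b = a then \<Prod>j\<in>A - {a}. x a - x j else 0)"
    using assms by (intro sum.cong refl) (auto intro: prod_zero)
  finally show ?thesis using assms by simp
qed

text \<open>Inverse discrete Fourier transform: when the \<open>alpha i\<close> are the \<open>n\<close> distinct roots of
  \<open>x\<^sup>n - lam\<close>, this interpolates \<open>a\<close> at them (\<open>poly_root_interp\<close>).\<close>
definition root_interp :: "nat \<Rightarrow> (nat \<Rightarrow> 'a::field) \<Rightarrow> (nat \<Rightarrow> 'a) \<Rightarrow> 'a poly" where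
  "root_interp n alpha a = (\<Sum>m<n. monom ((\<Sum>i\<in>{1..n}. a i / alpha i ^ m) / of_nat n) m)"

lemma coeff_root_interp:
  "coeff (root_interp n alpha a) m = (if m < n then (\<Sum>i\<in>{1..n}. a i / alpha i ^ m) / of_nat n else 0)"
  by (simp add: root_interp_def coeff_sum coeff_monom)

locale binomial_roots =
  fixes n :: nat and lam :: "'a::field" and alpha :: "nat \<Rightarrow> 'a"
  assumes n_pos: "0 < n"
    and lam_nz: "lam \<noteq> 0"
    and alpha_inj: "inj_on alpha {1..n}"
    and splits: "monom 1 n - [:lam:] = (\<Prod>i\<in>{1..n}. [:- alpha i, 1:])"
begin

lemma alpha_pow: "i \<in> {1..n} \<Longrightarrow> alpha i ^ n = lam"
proof -
  assume i: "i \<in> {1..n}"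
  have "poly (monom 1 n - [:lam:]) (alpha i) = (\<Prod>j\<in>{1..n}. poly [:- alpha j, 1:] (alpha i))"
    by (simp add: splits poly_prod)
  also have "\<dots> = 0" using i by (intro prod_zero) auto
  finally show ?thesis by (simp add: poly_monom)
qed

lemma alpha_nz: "i \<in> {1..n} \<Longrightarrow> alpha i \<noteq> 0"
  using alpha_pow lam_nz n_pos by force

text \<open>The roots are simple, so the derivative \<open>n x\<^sup>n\<^sup>-\<^sup>1\<close> does not vanish at them:
  the characteristic does not divide \<open>n\<close>.\<close>
lemma of_nat_n_nz: "(of_nat n :: 'a) \<noteq> 0"
proof -
  have one: "1 \<in> {1..n}" using n_pos by simp
  have "poly (pderiv (monom 1 n - [:lam:])) (alpha 1) = (\<Prod>j\<in>{1..n} - {1}. alpha 1 - alpha j)"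
    unfolding splits using one by (rule poly_pderiv_prod_linear[OF finite_atLeastAtMost])
  also have "\<dots> \<noteq> 0"
    using inj_onD[OF alpha_inj _ one] by (force simp: prod_zero_iff)
  finally show ?thesis by (simp add: pderiv_diff pderiv_monom poly_monom)
qed

lemma signed_prod_alpha: "(-1) ^ (n - 1) * (\<Prod>i\<in>{1..n}. alpha i) = lam"
proof -
  have "- lam = poly (monom 1 n - [:lam:]) 0"
    using n_pos by (simp add: poly_monom)
  also have "\<dots> = (-1) ^ n * (\<Prod>i\<in>{1..n}. alpha i)"
    by (simp add: splits poly_prod prod_uminus)
  finally show ?thesis
    using n_pos by (cases n) (simp_all add: minus_equation_iff)
qed

lemma coeff_prod_one_minus_alpha:
  assumes "j < n"
  shows "coeff (\<Prod>i\<in>{1..n}. [:1, - alpha i:]) j = (if j = 0 then 1 else 0)"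
proof -
  have reflect_linear: "reflect_poly [:- alpha i, 1:] = [:1, - alpha i:]" for i
    by (rule poly_eqI) (auto simp: coeff_reflect_poly coeff_pCons split: nat.splits)
  have "(\<Prod>i\<in>{1..n}. [:1, - alpha i:]) = reflect_poly (monom 1 n - [:lam:])"
    by (simp add: splits reflect_poly_prod reflect_linear)
  moreover have "degree (monom 1 n - [:lam:]) = n"
    using n_pos unfolding diff_conv_add_uminus by (subst degree_add_eq_left) (simp_all add: degree_monom_eq)
  ultimately show ?thesis
    using assms by (auto simp: coeff_reflect_poly coeff_monom coeff_pCons split: nat.splits)
qed

lemma compl_hom_alpha:
  assumes "d < int n"
  shows "compl_hom d n alpha = (if d = 0 then 1 else 0)"
proof (cases "d < 0")
  case False
  then obtain m where m: "d = int m" by (metis nonneg_int_cases not_less)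
  have "coeff (\<Prod>i\<in>{1..n}. [:1, - alpha i:]) j = (if j = 0 then 1 else 0)" if "j \<le> m" for j
    using that assms m by (intro coeff_prod_one_minus_alpha) simp
  then have "(\<Sum>j\<le>m. coeff (\<Prod>i\<in>{1..n}. [:1, - alpha i:]) j * compl_hom (int (m - j)) n alpha)
      = (\<Sum>j\<le>m. if j = 0 then compl_hom (int m) n alpha else 0)"
    by (intro sum.cong refl) simp
  then show ?thesis using compl_hom_convolution[where x = alpha and m = m and n = n] m by simp
qed (simp add: compl_hom_def)

lemma Omega_alpha:
  assumes "l < n" "1 \<le> i" "i \<le> l + 1"
  shows "Omega n l eta alpha i = eta (i - 1)"
proof -
  have "Omega n l eta alpha i = (\<Sum>t\<in>{0..l}. if t = i - 1 then eta t else 0)"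
    unfolding Omega_def using assms by (intro sum.cong refl) (auto simp: compl_hom_alpha)
  then show ?thesis using assms by simp
qed

lemma Phi_alpha:
  assumes "l < n" "1 \<le> i" "i \<le> l + 1"
  shows "Phi n l eta alpha i = lam * eta (i - 1)"
  unfolding Phi_def Omega_alpha[OF assms] signed_prod_alpha ..

lemma sum_pow_alpha_ratio:
  assumes "i \<in> {1..n}" "j \<in> {1..n}"
  shows "(\<Sum>m<n. (alpha j / alpha i) ^ m) = (if i = j then of_nat n else 0)"
proof (cases "i = j")
  case False
  have "alpha j / alpha i \<noteq> 1"
    using assms False alpha_nz inj_onD[OF alpha_inj] by force
  moreover have "(alpha j / alpha i) ^ n = 1"
    using assms by (simp add: power_divide alpha_pow lam_nz)
  ultimately show ?thesis using False by (simp add: geometric_sum)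
qed (use assms alpha_nz in simp)

lemma poly_root_interp:
  assumes "j \<in> {1..n}"
  shows "poly (root_interp n alpha a) (alpha j) = a j"
proof -
  have "poly (root_interp n alpha a) (alpha j) = (\<Sum>i\<in>{1..n}. a i * (\<Sum>m<n. (alpha j / alpha i) ^ m)) / of_nat n"
    by (simp add: root_interp_def poly_sum poly_monom sum_divide_distrib sum_distrib_left
        sum_distrib_right power_divide sum.swap[of _ "{..<n}"] mult_ac)
  also have "\<dots> = (\<Sum>i\<in>{1..n}. if i = j then a j * of_nat n else 0) / of_nat n"
    using assms by (intro arg_cong2[where f = "(/)"] sum.cong refl) (simp_all add: sum_pow_alpha_ratio)
  also have "\<dots> = a j"
    using assms of_nat_n_nz by simp
  finally show ?thesis .
qed

lemma coeff_root_interp_alpha: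
  assumes "m < n"
  shows "coeff (root_interp n alpha a) m = (\<Sum>i\<in>{1..n}. a i * alpha i ^ (n - m)) / (lam * of_nat n)"
proof -
  have "a i / alpha i ^ m = a i * alpha i ^ (n - m) / lam" if "i \<in> {1..n}" for i
    using that assms alpha_pow[OF that] alpha_nz[OF that] lam_nz
    by (simp add: field_simps flip: power_add)
  then show ?thesis
    using assms by (simp add: coeff_root_interp sum_divide_distrib)
qed

lemma degree_root_interp_le:
  assumes "k \<le> n" "\<And>j. j \<in> {1..k-1} \<Longrightarrow> (\<Sum>i\<in>{1..n}. a i * alpha i ^ j) = 0"
  shows "degree (root_interp n alpha a) \<le> n - k"
proof (rule degree_le, intro allI impI)
  fix m assume "n - k < m"
  show "coeff (root_interp n alpha a) m = 0"
  proof (cases "m < n")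
    case True
    with \<open>n - k < m\<close> have "n - m \<in> {1..k-1}" by auto
    then show ?thesis using assms(2) True by (simp add: coeff_root_interp_alpha)
  qed (simp add: coeff_root_interp)
qed

lemma poly_eqI_alpha:
  assumes "I \<subseteq> {1..n}" "\<And>i. i \<in> I \<Longrightarrow> poly p (alpha i) = poly q (alpha i)"
    and "degree p < card I" "degree q < card I"
  shows "p = q"
proof (rule poly_eqI_degree[of "alpha ` I"])
  have "card (alpha ` I) = card I"
    using assms(1) inj_on_subset[OF alpha_inj] by (simp add: card_image)
  then show "degree p < card (alpha ` I)" "degree q < card (alpha ` I)"
    using assms(3,4) by simp_all
qed (use assms(2) in auto)

end

lemma coeff_tgrs_poly:
  "coeff (tgrs_poly k l eta f) m =
     (if m < k then f m else 0) + f 0 * (if k \<le> m \<and> m \<le> k + l then eta (m - k) else 0)"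
proof -
  have "(\<Sum>j\<in>{0..l}. coeff (monom (eta j) (k + j)) m) = (\<Sum>j\<in>{0..l}. if j = m - k \<and> k \<le> m then eta j else 0)"
    by (rule sum.cong) (auto simp: coeff_monom)
  also have "\<dots> = (if k \<le> m \<and> m \<le> k + l then eta (m - k) else 0)"
    by (auto simp: sum.delta)
  finally show ?thesis
    by (simp add: tgrs_poly_def coeff_sum coeff_monom)
qed

lemma degree_tgrs_poly_le: "degree (tgrs_poly k l eta f) \<le> k + l"
  by (rule degree_le) (auto simp: coeff_tgrs_poly)

lemma tgrs_poly_indicator:
  assumes "0 < j" "j < k"
  shows "tgrs_poly k l eta (\<lambda>i. if i = j then 1 else 0) = monom 1 j"
  using assms by (intro poly_eqI) (simp add: coeff_tgrs_poly coeff_monom)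

lemma tgrs_poly_indicator_0:
  assumes "0 < k"
  shows "tgrs_poly k l eta (\<lambda>i. if i = 0 then 1 else 0) = 1 + (\<Sum>j\<in>{0..l}. monom (eta j) (k + j))"
proof -
  have "monom (if i = 0 then 1 else 0) i = (if i = 0 then 1 else (0 :: 'a poly))" for i
    by (simp add: monom_0 one_pCons)
  then show ?thesis using assms by (simp add: tgrs_poly_def)
qed

lemma annihilator_pow_sum_eq_0:
  assumes "\<And>g. (\<Sum>i\<in>{1..n}. w i * poly (tgrs_poly k l eta g) (alpha i)) = 0" "j \<in> {1..k-1}"
  shows "(\<Sum>i\<in>{1..n}. w i * alpha i ^ j) = 0"
proof -
  have "0 < j" "j < k" using assms(2) by auto
  then show ?thesis
    using assms(1)[of "\<lambda>i. if i = j then 1 else 0"] by (simp add: tgrs_poly_indicator poly_monom)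
qed

lemma annihilator_twisted_sum_eq_0:
  assumes "\<And>g. (\<Sum>i\<in>{1..n}. w i * poly (tgrs_poly k l eta g) (alpha i)) = 0" "0 < k"
  shows "(\<Sum>i\<in>{1..n}. w i) + (\<Sum>j\<in>{0..l}. eta j * (\<Sum>i\<in>{1..n}. w i * alpha i ^ (k + j))) = 0"
  using assms(1)[of "\<lambda>i. if i = 0 then 1 else 0"] assms(2)
  by (simp add: tgrs_poly_indicator_0 poly_sum poly_monom distrib_left sum.distrib sum_distrib_left
      sum.swap[of _ "{0..l}"] mult_ac)

lemma coeff_tgrs_poly_top:
  assumes "n = l + r + 2 * k" "j \<le> l"
  shows "coeff (tgrs_poly k l eta f) (n - k - j) = (if r \<le> j then f 0 * eta (l + r - j) else 0)"
  using assms by (auto simp: coeff_tgrs_poly algebra_simps)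

lemma zero_in_tgrs_code: "(\<lambda>_. 0) \<in> tgrs_code n k l eta alpha v"
proof -
  have "tgrs_poly k l eta (\<lambda>_. 0) = 0" by (simp add: tgrs_poly_def)
  then show ?thesis unfolding tgrs_code_def by (intro CollectI exI[of _ "\<lambda>_. 0"]) auto
qed

lemma is_LCD_iff:
  assumes "(\<lambda>_. 0) \<in> C"
  shows "is_LCD n C \<longleftrightarrow> (\<forall>c \<in> C \<inter> dual_code n C. c = (\<lambda>_. 0))"
  using assms unfolding is_LCD_def by (auto simp: dual_code_def)

lemma tgrs_hull_orthogonal:
  assumes "c = (\<lambda>i. if i \<in> {1..n} then v i * poly (tgrs_poly k l eta f) (alpha i) else 0)"
    and "c \<in> dual_code n (tgrs_code n k l eta alpha v)"
  shows "(\<Sum>i\<in>{1..n}. v i ^ 2 * poly (tgrs_poly k l eta f) (alpha i) * poly (tgrs_poly k l eta g) (alpha i)) = 0"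
proof -
  let ?c = "\<lambda>i. if i \<in> {1..n} then v i * poly (tgrs_poly k l eta g) (alpha i) else 0"
  have "?c \<in> tgrs_code n k l eta alpha v" unfolding tgrs_code_def by blast
  with assms(2) have "(\<Sum>i\<in>{1..n}. ?c i * c i) = 0" unfolding dual_code_def by auto
  then show ?thesis
    unfolding assms(1) by (simp add: power2_eq_square mult_ac)
qed

locale tgrs_roots = binomial_roots n lam alpha for n lam and alpha :: "nat \<Rightarrow> 'a::field" +
  fixes k l r :: nat and eta v :: "nat \<Rightarrow> 'a"
  assumes n_eq: "n = l + r + 2 * k"
    and k_pos: "0 < k"
    and v_sq_tail: "\<And>i. i \<in> {k..n} \<Longrightarrow> v i ^ 2 = 1"
    and v_sq_head: "\<And>i. i \<in> {1..k-1} \<Longrightarrow> v i ^ 2 \<noteq> 1"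
    and twist_cond: "1 + lam * (\<Sum>t\<in>{r..l}. eta t * eta (l + r - t)) \<noteq> 0"
begin

context
  fixes f :: "nat \<Rightarrow> 'a"
  assumes self_orth: "\<And>g. (\<Sum>i\<in>{1..n}. v i ^ 2 * poly (tgrs_poly k l eta f) (alpha i)
    * poly (tgrs_poly k l eta g) (alpha i)) = 0"
begin

lemma tgrs_poly_eq_root_interp:
  "tgrs_poly k l eta f = root_interp n alpha (\<lambda>i. v i ^ 2 * poly (tgrs_poly k l eta f) (alpha i))"
  (is "?p = root_interp n alpha ?w")
proof (rule poly_eqI_alpha[of "{k..n}"])
  show "{k..n} \<subseteq> {1..n}" using k_pos by auto
  fix i assume "i \<in> {k..n}"
  then show "poly ?p (alpha i) = poly (root_interp n alpha ?w) (alpha i)"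
    using k_pos by (simp add: poly_root_interp v_sq_tail)
next
  have "degree (root_interp n alpha ?w) \<le> n - k"
    using n_eq by (intro degree_root_interp_le annihilator_pow_sum_eq_0[OF self_orth]) auto
  moreover have "degree ?p \<le> n - k"
    using degree_tgrs_poly_le[of k l eta f] n_eq by simp
  ultimately show "degree ?p < card {k..n}" "degree (root_interp n alpha ?w) < card {k..n}"
    using n_eq by auto
qed

lemma tgrs_coeff_0_eq_0: "f 0 = 0"
proof -
  define w where "w i = v i ^ 2 * poly (tgrs_poly k l eta f) (alpha i)" for i
  define X where "X = (\<Sum>t\<in>{r..l}. eta t * eta (l + r - t))"
  have p_eq: "tgrs_poly k l eta f = root_interp n alpha w"
    unfolding w_def by (rule tgrs_poly_eq_root_interp)
  have sum_w: "(\<Sum>i\<in>{1..n}. w i) = of_nat n * f 0"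
  proof -
    have "f 0 = coeff (tgrs_poly k l eta f) 0" using k_pos by (simp add: coeff_tgrs_poly)
    also have "\<dots> = (\<Sum>i\<in>{1..n}. w i) / of_nat n" by (simp add: p_eq coeff_root_interp n_pos)
    finally show ?thesis using of_nat_n_nz by (simp add: field_simps)
  qed
  have sum_w_pow: "(\<Sum>i\<in>{1..n}. w i * alpha i ^ (k + j))
      = lam * of_nat n * (if r \<le> j then f 0 * eta (l + r - j) else 0)" if "j \<le> l" for j
  proof -
    have "(if r \<le> j then f 0 * eta (l + r - j) else 0) = coeff (tgrs_poly k l eta f) (n - k - j)"
      by (rule coeff_tgrs_poly_top[OF n_eq that, symmetric])
    also have "\<dots> = (\<Sum>i\<in>{1..n}. w i * alpha i ^ (k + j)) / (lam * of_nat n)"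
    proof -
      have "n - k - j < n" "n - (n - k - j) = k + j" using n_eq k_pos that by auto
      then show ?thesis by (simp add: p_eq coeff_root_interp_alpha)
    qed
    finally show ?thesis using lam_nz of_nat_n_nz by (simp add: field_simps)
  qed
  have eta_sum: "(\<Sum>j\<in>{0..l}. eta j * (if r \<le> j then f 0 * eta (l + r - j) else 0)) = f 0 * X"
  proof -
    have "{j \<in> {0..l}. r \<le> j} = {r..l}" by auto
    then have "(\<Sum>j\<in>{0..l}. if r \<le> j then eta j * (f 0 * eta (l + r - j)) else 0)
        = (\<Sum>j\<in>{r..l}. eta j * (f 0 * eta (l + r - j)))"
      by (simp flip: sum.inter_filter)
    then show ?thesis
      unfolding X_def sum_distrib_left by (simp add: if_distrib mult_ac cong: if_cong)
  qed
  have "0 = (\<Sum>i\<in>{1..n}. w i) + (\<Sum>j\<in>{0..l}. eta j * (\<Sum>i\<in>{1..n}. w i * alpha i ^ (k + j)))"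
    using annihilator_twisted_sum_eq_0[OF self_orth k_pos, folded w_def] by simp
  also have "\<dots> = of_nat n * f 0
      + (\<Sum>j\<in>{0..l}. eta j * (lam * of_nat n * (if r \<le> j then f 0 * eta (l + r - j) else 0)))"
    unfolding sum_w by (intro arg_cong[where f = "(+) _"] sum.cong refl) (subst sum_w_pow, auto)
  also have "\<dots> = of_nat n * (f 0 * (1 + lam * X))"
    using eta_sum by (simp add: sum_distrib_left algebra_simps flip: sum_distrib_left)
  finally have "of_nat n * (f 0 * (1 + lam * X)) = 0" ..
  then show ?thesis using of_nat_n_nz twist_cond by (simp add: X_def)
qed

lemma tgrs_poly_eq_0: "tgrs_poly k l eta f = 0"
proof -
  let ?p = "tgrs_poly k l eta f"
  have roots: "poly ?p (alpha i) = 0" if i: "i \<in> {1..k-1}" for i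
  proof -
    have "i \<in> {1..n}" using i n_eq by auto
    then have "poly ?p (alpha i) = v i ^ 2 * poly ?p (alpha i)"
      using arg_cong[OF tgrs_poly_eq_root_interp, of "\<lambda>p. poly p (alpha i)"]
      by (simp add: poly_root_interp)
    then have "(v i ^ 2 - 1) * poly ?p (alpha i) = 0" by (simp add: algebra_simps)
    then show ?thesis using v_sq_head[OF i] by simp
  qed
  have "poly ?p 0 = 0" using k_pos by (simp add: poly_0_coeff_0 coeff_tgrs_poly tgrs_coeff_0_eq_0)
  moreover have "degree ?p < k"
    using k_pos by (intro degree_lessI) (auto simp: coeff_tgrs_poly tgrs_coeff_0_eq_0)
  moreover have "card (insert 0 (alpha ` {1..k-1})) = k"
  proof -
    have "{1..k-1} \<subseteq> {1..n}" using n_eq by auto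
    then have "0 \<notin> alpha ` {1..k-1}" "card (alpha ` {1..k-1}) = k - 1"
      using alpha_nz inj_on_subset[OF alpha_inj] by (auto simp: card_image)
    then show ?thesis using k_pos by simp
  qed
  ultimately show ?thesis
    using roots by (intro poly_eqI_degree[of "insert 0 (alpha ` {1..k-1})"]) auto
qed

end

theorem is_LCD_tgrs_code: "is_LCD n (tgrs_code n k l eta alpha v)"
  unfolding is_LCD_iff[OF zero_in_tgrs_code]
proof
  fix c assume c: "c \<in> tgrs_code n k l eta alpha v \<inter> dual_code n (tgrs_code n k l eta alpha v)"
  then obtain f where cf: "c = (\<lambda>i. if i \<in> {1..n} then v i * poly (tgrs_poly k l eta f) (alpha i) else 0)"
    unfolding tgrs_code_def by blast
  have "tgrs_poly k l eta f = 0"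
    using tgrs_hull_orthogonal[OF cf] c by (intro tgrs_poly_eq_0) auto
  then show "c = (\<lambda>_. 0)" using cf by auto
qed

end

theorem theorem4p2:
  fixes lam :: "'a::{finite,field}"
    and alpha eta v :: "nat \<Rightarrow> 'a"
    and n l r k :: nat
  assumes q_odd: "odd (card (UNIV::'a set))"
    and n_pos: "n > 0"
    and n_dvd: "n dvd (card (UNIV::'a set) - 1)"
    and lam_nz: "lam \<noteq> 0"
    and lam_ord: "lam ^ ((card (UNIV::'a set) - 1) div n) = 1"
    and alpha_inj: "inj_on alpha {1..n}"
    and alpha_roots: "monom 1 n - [:lam:] = (\<Prod>i\<in>{1..n}. [:- alpha i, 1:])"
    and eta_nz: "\<exists>t\<in>{0..l}. eta t \<noteq> 0"
    and r_le: "r \<le> l"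
    and k_def: "n = l + r + 2 * k"
    and k_ge: "k \<ge> 2"
    and v_pm: "\<forall>i\<in>{k..n}. v i = 1 \<or> v i = -1"
    and v_other: "\<forall>i\<in>{1..k-1}. v i \<notin> {-1, 0, 1}"
    and cond: "1 + (\<Sum>t\<in>{r..l}. eta t * Phi n l eta alpha (l + 1 + r - t)) \<noteq> 0"
  shows "is_LCD n (tgrs_code n k l eta alpha v)"
proof -
  interpret binomial_roots n lam alpha
    using n_pos lam_nz alpha_inj alpha_roots by unfold_locales
  have "Phi n l eta alpha (l + 1 + r - t) = lam * eta (l + r - t)" if "t \<in> {r..l}" for t
  proof -
    have "l < n" "1 \<le> l + 1 + r - t" "l + 1 + r - t \<le> l + 1" "l + 1 + r - t - 1 = l + r - t"
      using that k_def k_ge by auto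
    then show ?thesis by (simp only: Phi_alpha)
  qed
  then have "(\<Sum>t\<in>{r..l}. eta t * Phi n l eta alpha (l + 1 + r - t))
      = lam * (\<Sum>t\<in>{r..l}. eta t * eta (l + r - t))"
    unfolding sum_distrib_left by (intro sum.cong refl) simp
  then interpret tgrs_roots n lam alpha k l r eta v
    using k_def k_ge v_pm v_other cond by unfold_locales (auto simp: power2_eq_1_iff)
  show ?thesis by (rule is_LCD_tgrs_code)
qed

end
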